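(* Let $(A;R)\in\mathcal C$ and let $X,Y$ be closed sets of $PG(A;R)$. Then $d(X\cup Y)=d(X)+d(Y)-d(X\cap Y)$ if and only if $X\cup Y\le A$ and $R|(X\cup Y)=(R|X)\cup(R|Y)$.
   Context: A set system is a pair $(A;R)$ where $R$ is a set of finite non-empty subsets of $A$; for $X\subseteq A$, $R[X]=\{r\in R:r\subseteq X\}$ and $\delta(X)=|X|-|R[X]|$; also $R|X=R[X]$. $\mathcal C$ is the class of finite set systems with $\delta(X)\ge0$ for all $X\subseteq A$. $X\le A$ means $\delta(X)\le\delta(X')$ for all $X\subseteq X'\subseteq A$. $d(X)=\min\{\delta(Y):X\subseteq Y\subseteq A\}$, $\mathrm{cl}(X)=\{y:d(X\cup\{y\})=d(X)\}$, and $PG(A;R)$ is the matroid $(A,\mathrm{cl})$; closed sets are $F$ with $\mathrm{cl}(F)=F$. *)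

theory Defs
  imports Main
begin

definition set_system :: "'a set \<Rightarrow> 'a set set \<Rightarrow> bool" where
  "set_system A R \<longleftrightarrow> (\<forall>r\<in>R. finite r \<and> r \<noteq> {} \<and> r \<subseteq> A)"

definition restr :: "'a set set \<Rightarrow> 'a set \<Rightarrow> 'a set set" where
  "restr R X = {r \<in> R. r \<subseteq> X}"

definition delta :: "'a set set \<Rightarrow> 'a set \<Rightarrow> int" where
  "delta R X = int (card X) - int (card (restr R X))"

definition classC :: "'a set \<Rightarrow> 'a set set \<Rightarrow> bool" where
  "classC A R \<longleftrightarrow> finite A \<and> set_system A R \<and> (\<forall>X. X \<subseteq> A \<longrightarrow> delta R X \<ge> 0)"

definition le_ss :: "'a set set \<Rightarrow> 'a set \<Rightarrow> 'a set \<Rightarrow> bool" where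
  "le_ss R X A \<longleftrightarrow> X \<subseteq> A \<and> (\<forall>X'. X \<subseteq> X' \<and> X' \<subseteq> A \<longrightarrow> delta R X \<le> delta R X')"

definition dd :: "'a set \<Rightarrow> 'a set set \<Rightarrow> 'a set \<Rightarrow> int" where
  "dd A R X = Min (delta R ` {Y. X \<subseteq> Y \<and> Y \<subseteq> A})"

definition cl :: "'a set \<Rightarrow> 'a set set \<Rightarrow> 'a set \<Rightarrow> 'a set" where
  "cl A R X = {y \<in> A. dd A R (X \<union> {y}) = dd A R X}"

definition closed_PG :: "'a set \<Rightarrow> 'a set set \<Rightarrow> 'a set \<Rightarrow> bool" where
  "closed_PG A R F \<longleftrightarrow> cl A R F = F"

end

theory Submission
  imports Defs
begin

(* The predimension delta satisfies an exact modular law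
     delta(X \<union> Y) + delta(X \<inter> Y) = delta X + delta Y - |R[X \<union> Y] - (R[X] \<union> R[Y])|,
   so delta is submodular, with equality exactly when every relation inside X \<union> Y
   already lies inside X or inside Y.  Next, d(Z) = delta(Z) holds precisely for the
   self-sufficient sets Z \<le> A, and d(Z) \<le> delta(Z) always.  Closed sets of PG(A;R)
   are self-sufficient (a witness of d(X) strictly larger than X would add a point to
   cl X), and by submodularity self-sufficient sets are closed under intersection.
   Hence for closed X, Y the values d X, d Y, d(X \<inter> Y) are the delta values, and the
   modular law together with d(X \<union> Y) \<le> delta(X \<union> Y) yields the equivalence. *)

lemma finite_restr: "finite X \<Longrightarrow> finite (restr R X)"
  unfolding restr_def by (rule finite_subset[of _ "Pow X"]) auto

lemma restr_inter: "restr R (X \<inter> Y) = restr R X \<inter> restr R Y"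
  unfolding restr_def by auto

lemma restr_union_subset: "restr R X \<union> restr R Y \<subseteq> restr R (X \<union> Y)"
  unfolding restr_def by auto

lemma delta_union_inter:
  assumes "finite X" "finite Y"
  shows "delta R (X \<union> Y) + delta R (X \<inter> Y) = delta R X + delta R Y
     - int (card (restr R (X \<union> Y) - (restr R X \<union> restr R Y)))"
proof -
  let ?U = "restr R X \<union> restr R Y" and ?W = "restr R (X \<union> Y)"
  have fin: "finite ?U" "finite ?W" using assms by (simp_all add: finite_restr)
  have points: "card (X \<union> Y) + card (X \<inter> Y) = card X + card Y"
    using card_Un_Int assms by metis
  have "card ?W = card (?U \<union> (?W - ?U))"
    using restr_union_subset[of R X Y] by (simp add: Un_absorb1)
  also have "\<dots> = card ?U + card (?W - ?U)"
    using fin by (intro card_Un_disjoint) auto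
  finally have split: "card ?W = card ?U + card (?W - ?U)" .
  have rels: "card ?U + card (restr R (X \<inter> Y)) = card (restr R X) + card (restr R Y)"
    using card_Un_Int[OF finite_restr finite_restr] assms restr_inter by metis
  show ?thesis unfolding delta_def using points split rels by linarith
qed

lemma delta_submodular:
  assumes "finite X" "finite Y"
  shows "delta R (X \<union> Y) + delta R (X \<inter> Y) \<le> delta R X + delta R Y"
  using delta_union_inter[OF assms, of R] by linarith

lemma finite_supersets: "finite A \<Longrightarrow> finite {Y. Z \<subseteq> Y \<and> Y \<subseteq> A}"
  by (rule finite_subset[of _ "Pow A"]) auto

lemma dd_le_delta:
  assumes "finite A" "Z \<subseteq> Y" "Y \<subseteq> A"
  shows "dd A R Z \<le> delta R Y"
  unfolding dd_def using assms finite_supersets[OF assms(1)] by (intro Min_le) auto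

lemma dd_attained:
  assumes "finite A" "Z \<subseteq> A"
  obtains Y where "Z \<subseteq> Y" "Y \<subseteq> A" "dd A R Z = delta R Y"
proof -
  have "dd A R Z \<in> delta R ` {Y. Z \<subseteq> Y \<and> Y \<subseteq> A}"
    unfolding dd_def using assms finite_supersets[OF assms(1)] by (intro Min_in) auto
  thus ?thesis using that by blast
qed

lemma dd_mono:
  assumes "finite A" "Z \<subseteq> Z'" "Z' \<subseteq> A"
  shows "dd A R Z \<le> dd A R Z'"
proof -
  obtain Y where "Z' \<subseteq> Y" "Y \<subseteq> A" "dd A R Z' = delta R Y"
    using dd_attained[OF assms(1,3)] .
  thus ?thesis using dd_le_delta[OF assms(1), of Z Y R] assms(2) by auto
qed

lemma dd_eq_delta_iff_le_ss:
  assumes "finite A" "Z \<subseteq> A"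
  shows "dd A R Z = delta R Z \<longleftrightarrow> le_ss R Z A"
proof
  assume "dd A R Z = delta R Z"
  thus "le_ss R Z A"
    unfolding le_ss_def using assms dd_le_delta[OF assms(1), of Z _ R] by auto
next
  assume ss: "le_ss R Z A"
  obtain Y where Y: "Z \<subseteq> Y" "Y \<subseteq> A" "dd A R Z = delta R Y"
    using dd_attained[OF assms] .
  have "delta R Z \<le> delta R Y" using ss Y unfolding le_ss_def by blast
  moreover have "dd A R Z \<le> delta R Z" using dd_le_delta[OF assms(1) order_refl assms(2)] .
  ultimately show "dd A R Z = delta R Z" using Y(3) by simp
qed

text \<open>A closed set is self-sufficient: a superset \<open>Y \<supset> X\<close> realising \<open>d X\<close> would
  put every point of \<open>Y - X\<close> into the closure of \<open>X\<close>.\<close>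
lemma closed_imp_le_ss:
  assumes "finite A" "closed_PG A R X"
  shows "le_ss R X A"
proof -
  have XA: "X \<subseteq> A" using assms(2) unfolding closed_PG_def cl_def by blast
  obtain Y where Y: "X \<subseteq> Y" "Y \<subseteq> A" "dd A R X = delta R Y"
    using dd_attained[OF assms(1) XA] .
  have "Y \<subseteq> X"
  proof
    fix y assume y: "y \<in> Y"
    have "dd A R (X \<union> {y}) \<le> dd A R X"
      using dd_le_delta[OF assms(1), of "X \<union> {y}" Y R] Y y by auto
    moreover have "dd A R X \<le> dd A R (X \<union> {y})"
      using dd_mono[OF assms(1), of X "X \<union> {y}" R] Y y by blast
    ultimately have "y \<in> cl A R X" unfolding cl_def using Y y by auto
    thus "y \<in> X" using assms(2) unfolding closed_PG_def by simp
  qed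
  hence "dd A R X = delta R X" using Y by simp
  thus ?thesis using dd_eq_delta_iff_le_ss[OF assms(1) XA] by simp
qed

text \<open>Self-sufficient sets are closed under intersection; the two inequalities come
  from submodularity applied to the pairs \<open>(Z, X)\<close> and \<open>(Z \<inter> X, Y)\<close>.\<close>
lemma le_ss_inter:
  assumes "finite A" "le_ss R X A" "le_ss R Y A"
  shows "le_ss R (X \<inter> Y) A"
  unfolding le_ss_def
proof (intro conjI allI impI)
  have XA: "X \<subseteq> A" and YA: "Y \<subseteq> A" using assms(2,3) unfolding le_ss_def by auto
  have fin: "finite U" if "U \<subseteq> A" for U using finite_subset[OF that assms(1)] .
  show "X \<inter> Y \<subseteq> A" using XA by auto
  fix Z assume Z: "X \<inter> Y \<subseteq> Z \<and> Z \<subseteq> A"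
  have fZ: "finite Z" and fX: "finite X" and fZX: "finite (Z \<inter> X)" and fY: "finite Y"
    using fin Z XA YA by auto
  have "delta R X \<le> delta R (Z \<union> X)" using assms(2) Z XA unfolding le_ss_def by auto
  hence ZX: "delta R (Z \<inter> X) \<le> delta R Z"
    using delta_submodular[OF fZ fX, of R] by linarith
  have "Z \<inter> X \<union> Y \<subseteq> A" using Z YA by blast
  hence "delta R Y \<le> delta R (Z \<inter> X \<union> Y)" using assms(3) unfolding le_ss_def by blast
  hence "delta R (Z \<inter> X \<inter> Y) \<le> delta R (Z \<inter> X)"
    using delta_submodular[OF fZX fY, of R] by linarith
  moreover have "Z \<inter> X \<inter> Y = X \<inter> Y" using Z by auto
  ultimately show "delta R (X \<inter> Y) \<le> delta R Z" using ZX by simp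
qed

theorem lemma6p2:
  fixes A :: "'a set" and R :: "'a set set" and X Y :: "'a set"
  assumes "classC A R"
    and "closed_PG A R X" and "closed_PG A R Y"
  shows "dd A R (X \<union> Y) = dd A R X + dd A R Y - dd A R (X \<inter> Y)
     \<longleftrightarrow> (le_ss R (X \<union> Y) A \<and> restr R (X \<union> Y) = restr R X \<union> restr R Y)"
proof -
  have fA: "finite A" using assms(1) unfolding classC_def by simp
  have ssX: "le_ss R X A" and ssY: "le_ss R Y A"
    using closed_imp_le_ss[OF fA] assms(2,3) by auto
  have XA: "X \<subseteq> A" and YA: "Y \<subseteq> A" using ssX ssY unfolding le_ss_def by auto
  have fX: "finite X" and fY: "finite Y" using XA YA fA finite_subset by auto
  have "dd A R X = delta R X" "dd A R Y = delta R Y"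
    and "dd A R (X \<inter> Y) = delta R (X \<inter> Y)"
    using dd_eq_delta_iff_le_ss[OF fA] XA YA ssX ssY le_ss_inter[OF fA ssX ssY]
    by (auto simp: le_ss_def)
  moreover have "dd A R (X \<union> Y) = delta R (X \<union> Y) \<longleftrightarrow> le_ss R (X \<union> Y) A"
    and "dd A R (X \<union> Y) \<le> delta R (X \<union> Y)"
    using dd_eq_delta_iff_le_ss[OF fA] dd_le_delta[OF fA order_refl] XA YA by auto
  moreover
  define D where "D = restr R (X \<union> Y) - (restr R X \<union> restr R Y)"
  have "delta R (X \<union> Y) + delta R (X \<inter> Y) = delta R X + delta R Y - int (card D)"
    unfolding D_def by (rule delta_union_inter[OF fX fY])
  moreover have "card D = 0 \<longleftrightarrow> restr R (X \<union> Y) = restr R X \<union> restr R Y"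
    using finite_restr[of "X \<union> Y" R] fX fY restr_union_subset[of R X Y]
    unfolding D_def by auto
  ultimately show ?thesis by linarith
qed

end
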